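(* Let $M$ be an $m\times n$ $0/1$-matrix and let $B$ be a block of $M$ of size $r\times c$. Given the data structure $\Phi(B)$, and given the set of entries of the input boundary $B^-$ that are reachable from $(1,1)$, one can determine in $O(r+c)$ time the set of entries of the output boundary $B^+$ that are reachable from $(1,1)$.
   Context: Entries of $M$ are indexed $(a,b)$, rows increasing from bottom to top, columns left to right. A path from $(k,l)$ to $(i,j)$ is a sequence of $1$-entries starting at $(k,l)$ and ending at $(i,j)$ in which each step goes from $(a,b)$ to $(a+1,b)$, $(a,b+1)$ or $(a+1,b+1)$; $(i,j)$ is reachable from $(k,l)$ if such a path exists. A block $B$ is the submatrix formed by rows $r^-\le a\le r^+$ and columns $s^-\le b\le s^+$. Its input boundary $B^-$ consists of the entries in row $r^-$ or column $s^-$ of $B$, ordered: first row $r^-$ from column $s^+$ down to $s^-$, then the remaining entries of column $s^-$ from row $r^-+1$ up to $r^+$. Its output boundary $B^+$ consists of the entries in row $r^+$ or column $s^+$ of $B$, ordered: first column $s^+$ from row $r^-$ up to $r^+$, then the remaining entries of row $r^+$ from column $s^+-1$ down to $s^-$. The data structure $\Phi(B)$ stores: (1) for each $1$-entry $i$ of $B^-$, the first entry $\sigma_A(i)$ and the last entry $\sigma_Z(i)$ of $B^+$ (in output-boundary order) that are reachable from $i$; (2) for each $1$-entry $j$ of $B^+$, a flag $f(j)$ indicating whether $j$ is reachable from some entry of $B^-$, a list $L_A(j)$ of the $1$-entries $i\in B^-$ with $\sigma_A(i)=j$, and a list $L_Z(j)$ of the $1$-entries $i\in B^-$ with $\sigma_Z(i)=j$.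 Running time is measured in the RAM model with constant-time access to these stored items. *)

theory Defs
  imports Main
begin

text \<open>A 0/1-matrix of size m x n is modelled as a predicate M a b (True = entry 1),
  with rows 1..m (bottom to top) and columns 1..n (left to right).\<close>

definition is_one :: "nat \<Rightarrow> nat \<Rightarrow> (nat \<Rightarrow> nat \<Rightarrow> bool) \<Rightarrow> nat \<times> nat \<Rightarrow> bool" where
  "is_one m n M x \<longleftrightarrow> 1 \<le> fst x \<and> fst x \<le> m \<and> 1 \<le> snd x \<and> snd x \<le> n \<and> M (fst x) (snd x)"

definition mstep :: "nat \<times> nat \<Rightarrow> nat \<times> nat \<Rightarrow> bool" where
  "mstep x y \<longleftrightarrow> y = (fst x + 1, snd x) \<or> y = (fst x, snd x + 1) \<or> y = (fst x + 1, snd x + 1)"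

definition is_path :: "nat \<Rightarrow> nat \<Rightarrow> (nat \<Rightarrow> nat \<Rightarrow> bool) \<Rightarrow> (nat \<times> nat) list \<Rightarrow> bool" where
  "is_path m n M p \<longleftrightarrow> p \<noteq> [] \<and> (\<forall>x\<in>set p. is_one m n M x)
     \<and> (\<forall>k. Suc k < length p \<longrightarrow> mstep (p ! k) (p ! Suc k))"

definition reachable :: "nat \<Rightarrow> nat \<Rightarrow> (nat \<Rightarrow> nat \<Rightarrow> bool) \<Rightarrow> nat \<times> nat \<Rightarrow> nat \<times> nat \<Rightarrow> bool" where
  "reachable m n M x y \<longleftrightarrow> (\<exists>p. is_path m n M p \<and> hd p = x \<and> last p = y)"

definition bnd_in :: "nat \<Rightarrow> nat \<Rightarrow> nat \<Rightarrow> nat \<Rightarrow> (nat \<times> nat) list" where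
  "bnd_in rm rp sm sp = map (\<lambda>b. (rm, b)) (rev [sm..<Suc sp]) @ map (\<lambda>a. (a, sm)) [Suc rm..<Suc rp]"

definition bnd_out :: "nat \<Rightarrow> nat \<Rightarrow> nat \<Rightarrow> nat \<Rightarrow> (nat \<times> nat) list" where
  "bnd_out rm rp sm sp = map (\<lambda>a. (a, sp)) [rm..<Suc rp] @ map (\<lambda>b. (rp, b)) (rev [sm..<sp])"

text \<open>The data structure Phi(B); boundary entries are referred to by their (0-based) position
  in the respective boundary order.  sigA/sigZ are None if the input entry is not a 1-entry
  or reaches no output entry.\<close>
record phi =
  sigA :: "nat \<Rightarrow> nat option"
  sigZ :: "nat \<Rightarrow> nat option"
  flag :: "nat \<Rightarrow> bool"
  LA :: "nat \<Rightarrow> nat list"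
  LZ :: "nat \<Rightarrow> nat list"

definition is_phi :: "nat \<Rightarrow> nat \<Rightarrow> (nat \<Rightarrow> nat \<Rightarrow> bool) \<Rightarrow> nat \<Rightarrow> nat \<Rightarrow> nat \<Rightarrow> nat \<Rightarrow> phi \<Rightarrow> bool" where
  "is_phi m n M rm rp sm sp P \<longleftrightarrow>
    (let Bi = bnd_in rm rp sm sp; Bo = bnd_out rm rp sm sp;
         R = (\<lambda>k. {q. q < length Bo \<and> reachable m n M (Bi ! k) (Bo ! q)}) in
     (\<forall>k < length Bi.
        (if is_one m n M (Bi ! k) \<and> R k \<noteq> {}
         then sigA P k = Some (Min (R k)) \<and> sigZ P k = Some (Max (R k))
         else sigA P k = None \<and> sigZ P k = None))
   \<and> (\<forall>q < length Bo.
        flag P q = (\<exists>k < length Bi. reachable m n M (Bi ! k) (Bo ! q))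
      \<and> distinct (LA P q) \<and> set (LA P q) = {k. k < length Bi \<and> sigA P k = Some q}
      \<and> distinct (LZ P q) \<and> set (LZ P q) = {k. k < length Bi \<and> sigZ P k = Some q}))"

text \<open>The linear-time sweep over the output boundary, with an explicit RAM step count
  (constant work per visited boundary position and per list element read).
  Arguments: Phi, the reachable input positions R, current output position j,
  remaining positions, counter of currently open intervals.\<close>
fun sweep :: "phi \<Rightarrow> (nat \<Rightarrow> bool) \<Rightarrow> nat \<Rightarrow> nat \<Rightarrow> nat \<Rightarrow> nat list \<times> nat" where
  "sweep P R j 0 cnt = ([], 1)"
| "sweep P R j (Suc k) cnt =
     (let cnt1 = cnt + length (filter R (LA P j));
          cnt2 = cnt1 - length (filter R (LZ P j));
          res = sweep P R (Suc j) k cnt2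
      in ((if flag P j \<and> 0 < cnt1 then j # fst res else fst res),
          snd res + 1 + length (LA P j) + length (LZ P j)))"

end

theory Submission
  imports Defs
begin

text \<open>Paths move weakly up and to the right, so every path from (1,1) to the output boundary
  enters the block through an input entry, and two paths whose endpoints cross with respect to the
  boundary orders must meet.  Hence, among the output entries reachable from the input boundary at
  all, those reachable from a single input entry i form the whole interval [sigA i, sigZ i], and an
  output entry j is reachable from (1,1) iff f(j) holds and j lies in the interval of an input
  entry reachable from (1,1).  One sweep along the output boundary maintains the number of such
  intervals currently open, adding L_A(j) and removing L_Z(j) at each position; since each input
  entry occurs in one list L_A and one list L_Z, the sweep takes O(r + c) steps.\<close>

definition edge :: "nat \<Rightarrow> nat \<Rightarrow> (nat \<Rightarrow> nat \<Rightarrow> bool) \<Rightarrow> nat \<times> nat \<Rightarrow> nat \<times> nat \<Rightarrow> bool" where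
  "edge m n M u v \<longleftrightarrow> is_one m n M u \<and> is_one m n M v \<and> mstep u v"

lemma is_path_Cons_Cons:
  "is_path m n M (a # b # r) \<longleftrightarrow> is_one m n M a \<and> mstep a b \<and> is_path m n M (b # r)"
  by (auto simp: is_path_def nth_Cons split: nat.splits)

lemma is_path_rtranclp_edge:
  "is_path m n M p \<Longrightarrow> is_one m n M (hd p) \<and> (edge m n M)\<^sup>*\<^sup>* (hd p) (last p)"
proof (induction p rule: induct_list012)
  case (3 x y zs)
  then show ?case
    by (auto simp: is_path_Cons_Cons edge_def intro: converse_rtranclp_into_rtranclp)
qed (auto simp: is_path_def)

lemma rtranclp_edge_is_path:
  assumes "(edge m n M)\<^sup>*\<^sup>* x y" "is_one m n M x"
  shows "\<exists>p. is_path m n M p \<and> hd p = x \<and> last p = y"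
  using assms
proof (induction rule: converse_rtranclp_induct)
  case base
  then show ?case by (intro exI[of _ "[y]"]) (simp add: is_path_def)
next
  case (step x z)
  then obtain p where p: "is_path m n M p" "hd p = z" "last p = y"
    by (meson edge_def)
  then obtain r where "p = z # r" by (cases p) (auto simp: is_path_def)
  with p step.hyps show ?case
    by (intro exI[of _ "x # p"]) (auto simp: is_path_Cons_Cons edge_def)
qed

lemma reachable_iff_rtranclp:
  "reachable m n M x y \<longleftrightarrow> is_one m n M x \<and> (edge m n M)\<^sup>*\<^sup>* x y"
  unfolding reachable_def using is_path_rtranclp_edge rtranclp_edge_is_path by metis

lemma reachable_trans:
  "reachable m n M x y \<Longrightarrow> reachable m n M y z \<Longrightarrow> reachable m n M x z"
  unfolding reachable_iff_rtranclp by auto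

lemma mstep_coord_bounds:
  "mstep u v \<Longrightarrow> fst u \<le> fst v \<and> fst v \<le> Suc (fst u) \<and> snd u \<le> snd v \<and> snd v \<le> Suc (snd u)"
  by (auto simp: mstep_def)

lemma rtranclp_edge_coord_mono:
  "(edge m n M)\<^sup>*\<^sup>* u v \<Longrightarrow> fst u \<le> fst v \<and> snd u \<le> snd v"
  by (induction rule: rtranclp_induct) (auto dest!: mstep_coord_bounds simp: edge_def)

lemma rtranclp_edge_is_one:
  "(edge m n M)\<^sup>*\<^sup>* x y \<Longrightarrow> is_one m n M x \<Longrightarrow> is_one m n M y"
  by (induction rule: rtranclp_induct) (auto simp: edge_def)

text \<open>Planarity: the second path starts weakly below-right of the first and ends weakly above-left
  of it, so the two monotone paths meet.  The induction advances a path that is strictly behind the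
  other in one coordinate.\<close>
lemma relpowp_edge_cross:
  assumes "(edge m n M ^^ N) x y" "(edge m n M ^^ N') x' y'"
    and "fst x' \<le> fst x" "snd x \<le> snd x'" "fst y \<le> fst y'" "snd y' \<le> snd y"
  shows "(edge m n M)\<^sup>*\<^sup>* x y' \<and> (edge m n M)\<^sup>*\<^sup>* x' y"
  using assms
proof (induction "N + N'" arbitrary: N N' x x' rule: less_induct)
  case less
  let ?E = "edge m n M"
  have xy: "?E\<^sup>*\<^sup>* x y" and xy': "?E\<^sup>*\<^sup>* x' y'"
    using less.prems(1,2) relpowp_imp_rtranclp by metis+
  consider "x = x'" | "fst x' < fst x" | "snd x < snd x'"
    using less.prems(3,4) by (metis le_neq_implies_less prod.collapse)
  then show ?case
  proof cases
    case 1
    with xy xy' show ?thesis by simp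
  next
    case 2
    have "N' \<noteq> 0"
    proof
      assume "N' = 0"
      with less.prems(2) have "x' = y'" by simp
      with 2 less.prems(5) rtranclp_edge_coord_mono[OF xy] show False by simp
    qed
    then obtain N0 z where N0: "N' = Suc N0" and z: "?E x' z" "(?E ^^ N0) z y'"
      using less.prems(2) relpowp_Suc_D2 by (metis not0_implies_Suc)
    have "fst z \<le> fst x" "snd x \<le> snd z"
      using z(1) 2 less.prems(4) by (auto dest!: mstep_coord_bounds simp: edge_def)
    with less.hyps[of N N0 x z] less.prems z N0 show ?thesis
      by (auto intro: converse_rtranclp_into_rtranclp)
  next
    case 3
    have "N \<noteq> 0"
    proof
      assume "N = 0"
      with less.prems(1) have "x = y" by simp
      with 3 less.prems(6) rtranclp_edge_coord_mono[OF xy'] show False by simp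
    qed
    then obtain N0 z where N0: "N = Suc N0" and z: "?E x z" "(?E ^^ N0) z y"
      using less.prems(1) relpowp_Suc_D2 by (metis not0_implies_Suc)
    have "fst x' \<le> fst z" "snd z \<le> snd x'"
      using z(1) 3 less.prems(3) by (auto dest!: mstep_coord_bounds simp: edge_def)
    with less.hyps[of N0 N' z x'] less.prems z N0 show ?thesis
      by (auto intro: converse_rtranclp_into_rtranclp)
  qed
qed

lemma reachable_cross:
  assumes "reachable m n M x y" "reachable m n M x' y'"
    and "fst x' \<le> fst x" "snd x \<le> snd x'" "fst y \<le> fst y'" "snd y' \<le> snd y"
  shows "reachable m n M x y' \<and> reachable m n M x' y"
proof -
  obtain N N' where "(edge m n M ^^ N) x y" "(edge m n M ^^ N') x' y'"
    using assms(1,2) by (metis reachable_iff_rtranclp rtranclp_imp_relpowp)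
  from relpowp_edge_cross[OF this assms(3-6)] assms(1,2) show ?thesis
    by (simp add: reachable_iff_rtranclp)
qed

lemma length_bnd_in: "length (bnd_in rm rp sm sp) = (Suc sp - sm) + (rp - rm)"
  unfolding bnd_in_def length_append length_map length_rev length_upt by simp

lemma length_bnd_out: "length (bnd_out rm rp sm sp) = (Suc rp - rm) + (sp - sm)"
  unfolding bnd_out_def length_append length_map length_rev length_upt by simp

lemma nth_bnd_in:
  "sm \<le> sp \<Longrightarrow> k < length (bnd_in rm rp sm sp) \<Longrightarrow> bnd_in rm rp sm sp ! k =
    (if k < Suc sp - sm then (rm, sp - k) else (Suc rm + (k - (Suc sp - sm)), sm))"
  by (auto simp: bnd_in_def nth_append rev_nth simp del: upt_Suc)

lemma nth_bnd_out:
  "rm \<le> rp \<Longrightarrow> k < length (bnd_out rm rp sm sp) \<Longrightarrow> bnd_out rm rp sm sp ! k =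
    (if k < Suc rp - rm then (rm + k, sp) else (rp, sp - Suc (k - (Suc rp - rm))))"
  by (auto simp: bnd_out_def nth_append rev_nth simp del: upt_Suc)

lemma bnd_in_nth_mono:
  assumes "sm \<le> sp" "k \<le> k'" "k' < length (bnd_in rm rp sm sp)"
  shows "fst (bnd_in rm rp sm sp ! k) \<le> fst (bnd_in rm rp sm sp ! k')
    \<and> snd (bnd_in rm rp sm sp ! k') \<le> snd (bnd_in rm rp sm sp ! k)"
  using assms by (simp add: nth_bnd_in) (auto simp: length_bnd_in)

lemma bnd_out_nth_mono:
  assumes "rm \<le> rp" "sm \<le> sp" "k \<le> k'" "k' < length (bnd_out rm rp sm sp)"
  shows "fst (bnd_out rm rp sm sp ! k) \<le> fst (bnd_out rm rp sm sp ! k')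
    \<and> snd (bnd_out rm rp sm sp ! k') \<le> snd (bnd_out rm rp sm sp ! k)"
  using assms by (simp add: nth_bnd_out) (auto simp: length_bnd_out)

lemma bnd_out_nth_in_block:
  assumes "rm \<le> rp" "sm \<le> sp" "q < length (bnd_out rm rp sm sp)"
  shows "rm \<le> fst (bnd_out rm rp sm sp ! q) \<and> fst (bnd_out rm rp sm sp ! q) \<le> rp
    \<and> sm \<le> snd (bnd_out rm rp sm sp ! q) \<and> snd (bnd_out rm rp sm sp ! q) \<le> sp"
  using assms by (simp add: nth_bnd_out) (auto simp: length_bnd_out)

lemma in_set_bnd_in:
  assumes "rm \<le> fst v" "fst v \<le> rp" "sm \<le> snd v" "snd v \<le> sp" "fst v = rm \<or> snd v = sm"
  shows "v \<in> set (bnd_in rm rp sm sp)"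
proof (cases "fst v = rm")
  case True
  with assms have "v \<in> set (map (\<lambda>b. (rm, b)) (rev [sm..<Suc sp]))" by (cases v) auto
  then show ?thesis unfolding bnd_in_def by simp
next
  case False
  with assms have "v \<in> set (map (\<lambda>a. (a, sm)) [Suc rm..<Suc rp])" by (cases v) auto
  then show ?thesis unfolding bnd_in_def by simp
qed

lemma rtranclp_edge_enters_block:
  assumes "(edge m n M)\<^sup>*\<^sup>* x y" "fst x \<le> rm \<or> snd x \<le> sm" "rm \<le> fst y" "sm \<le> snd y"
  shows "\<exists>v. (edge m n M)\<^sup>*\<^sup>* x v \<and> (edge m n M)\<^sup>*\<^sup>* v y
    \<and> rm \<le> fst v \<and> sm \<le> snd v \<and> (fst v = rm \<or> snd v = sm)"
  using assms(1,2)
proof (induction rule: converse_rtranclp_induct)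
  case base
  with assms(3,4) show ?case by (intro exI[of _ y]) auto
next
  case (step x z)
  show ?case
  proof (cases "rm \<le> fst x \<and> sm \<le> snd x")
    case True
    with step show ?thesis
      by (intro exI[of _ x]) (auto intro: converse_rtranclp_into_rtranclp)
  next
    case False
    with step have "fst z \<le> rm \<or> snd z \<le> sm"
      by (auto dest!: mstep_coord_bounds simp: edge_def)
    with step.hyps step.IH show ?thesis by (meson converse_rtranclp_into_rtranclp)
  qed
qed

lemma reachable_bnd_out_through_bnd_in:
  assumes "rm \<le> rp" "sm \<le> sp" "fst x \<le> rm \<or> snd x \<le> sm"
    and "q < length (bnd_out rm rp sm sp)" "reachable m n M x (bnd_out rm rp sm sp ! q)"
  obtains k where "k < length (bnd_in rm rp sm sp)" "reachable m n M x (bnd_in rm rp sm sp ! k)"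
    "reachable m n M (bnd_in rm rp sm sp ! k) (bnd_out rm rp sm sp ! q)"
proof -
  let ?y = "bnd_out rm rp sm sp ! q"
  have x: "is_one m n M x" "(edge m n M)\<^sup>*\<^sup>* x ?y"
    using assms(5) by (auto simp: reachable_iff_rtranclp)
  have y: "rm \<le> fst ?y" "fst ?y \<le> rp" "sm \<le> snd ?y" "snd ?y \<le> sp"
    using bnd_out_nth_in_block[OF assms(1,2,4)] by auto
  obtain v where v: "(edge m n M)\<^sup>*\<^sup>* x v" "(edge m n M)\<^sup>*\<^sup>* v ?y"
    "rm \<le> fst v" "sm \<le> snd v" "fst v = rm \<or> snd v = sm"
    using rtranclp_edge_enters_block[OF x(2) assms(3) y(1,3)] by blast
  have "fst v \<le> rp" "snd v \<le> sp"
    using rtranclp_edge_coord_mono[OF v(2)] y by auto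
  with v have "v \<in> set (bnd_in rm rp sm sp)" by (intro in_set_bnd_in) auto
  then obtain k where "k < length (bnd_in rm rp sm sp)" "bnd_in rm rp sm sp ! k = v"
    by (metis in_set_conv_nth)
  moreover have "is_one m n M v" using rtranclp_edge_is_one[OF v(1) x(1)] .
  ultimately show ?thesis
    using that x v by (simp add: reachable_iff_rtranclp)
qed

lemma reachable_bnd_out_between:
  assumes "rm \<le> rp" "sm \<le> sp"
    and "k < length (bnd_in rm rp sm sp)" "k' < length (bnd_in rm rp sm sp)"
    and "a \<le> q" "q \<le> z" "z < length (bnd_out rm rp sm sp)"
    and "reachable m n M (bnd_in rm rp sm sp ! k) (bnd_out rm rp sm sp ! a)"
    and "reachable m n M (bnd_in rm rp sm sp ! k) (bnd_out rm rp sm sp ! z)"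
    and "reachable m n M (bnd_in rm rp sm sp ! k') (bnd_out rm rp sm sp ! q)"
  shows "reachable m n M (bnd_in rm rp sm sp ! k) (bnd_out rm rp sm sp ! q)"
proof (cases "k' \<le> k")
  case True
  then show ?thesis
    using reachable_cross[OF assms(8,10)] bnd_in_nth_mono[OF assms(2) True assms(3)]
      bnd_out_nth_mono[OF assms(1,2,5)] assms(6,7) by simp
next
  case False
  then show ?thesis
    using reachable_cross[OF assms(10,9)] bnd_in_nth_mono[OF assms(2), of k k']
      bnd_out_nth_mono[OF assms(1,2,6,7)] assms(4) by simp
qed

definition interval_lists :: "phi \<Rightarrow> nat \<Rightarrow> nat \<Rightarrow> bool" where
  "interval_lists P li lo \<longleftrightarrow>
     (\<forall>k<li. (sigA P k = None \<longleftrightarrow> sigZ P k = None)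
        \<and> (\<forall>a z. sigA P k = Some a \<longrightarrow> sigZ P k = Some z \<longrightarrow> a \<le> z))
   \<and> (\<forall>q<lo. distinct (LA P q) \<and> set (LA P q) = {k. k < li \<and> sigA P k = Some q}
        \<and> distinct (LZ P q) \<and> set (LZ P q) = {k. k < li \<and> sigZ P k = Some q})"

definition covering :: "phi \<Rightarrow> (nat \<Rightarrow> bool) \<Rightarrow> nat \<Rightarrow> nat \<Rightarrow> nat set" where
  "covering P R li q =
     {k. k < li \<and> R k \<and> (\<exists>a z. sigA P k = Some a \<and> sigZ P k = Some z \<and> a \<le> q \<and> q \<le> z)}"

definition open_intervals :: "phi \<Rightarrow> (nat \<Rightarrow> bool) \<Rightarrow> nat \<Rightarrow> nat \<Rightarrow> nat set" where
  "open_intervals P R li j =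
     {k. k < li \<and> R k \<and> (\<exists>a z. sigA P k = Some a \<and> sigZ P k = Some z \<and> a < j \<and> j \<le> z)}"

lemma length_filter_distinct: "distinct xs \<Longrightarrow> length (filter R xs) = card {x \<in> set xs. R x}"
  by (metis distinct_card distinct_filter set_filter)

lemma card_covering:
  assumes "interval_lists P li lo" "j < lo"
  shows "card (covering P R li j) = card (open_intervals P R li j) + length (filter R (LA P j))"
proof -
  let ?A = "{k. k < li \<and> R k \<and> sigA P k = Some j}"
  have "covering P R li j = open_intervals P R li j \<union> ?A"
    using assms(1) unfolding interval_lists_def covering_def open_intervals_def
    by (fastforce simp: le_less)
  moreover have "open_intervals P R li j \<inter> ?A = {}"
    unfolding open_intervals_def by auto
  moreover have "length (filter R (LA P j)) = card ?A"
    using assms unfolding interval_lists_def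
    by (auto simp: length_filter_distinct intro: arg_cong[where f = card])
  ultimately show ?thesis
    by (simp add: card_Un_disjoint open_intervals_def)
qed

lemma card_open_intervals_Suc:
  assumes "interval_lists P li lo" "j < lo"
  shows "card (open_intervals P R li (Suc j)) = card (covering P R li j) - length (filter R (LZ P j))"
proof -
  let ?Z = "{k. k < li \<and> R k \<and> sigZ P k = Some j}"
  have "?Z \<subseteq> covering P R li j"
    using assms(1) unfolding interval_lists_def covering_def by fastforce
  moreover have "open_intervals P R li (Suc j) = covering P R li j - ?Z"
    unfolding open_intervals_def covering_def by auto
  moreover have "length (filter R (LZ P j)) = card ?Z"
    using assms unfolding interval_lists_def
    by (auto simp: length_filter_distinct intro: arg_cong[where f = card])
  ultimately show ?thesis
    by (simp add: card_Diff_subset covering_def)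
qed

text \<open>The counter passed along by the sweep is the number of reachable input entries whose
  interval was opened before the current position and is still open there.\<close>
lemma set_sweep:
  assumes "interval_lists P li lo" "j + r = lo"
  shows "set (fst (sweep P R j r (card (open_intervals P R li j))))
    = {q. j \<le> q \<and> q < lo \<and> flag P q \<and> covering P R li q \<noteq> {}}"
  using assms(2)
proof (induction r arbitrary: j)
  case (Suc r)
  have j: "j < lo" using Suc.prems by simp
  have "finite (covering P R li j)" by (simp add: covering_def)
  then have "0 < card (covering P R li j) \<longleftrightarrow> covering P R li j \<noteq> {}"
    by (simp add: card_gt_0_iff)
  moreover have "{q. j \<le> q \<and> q < lo \<and> flag P q \<and> covering P R li q \<noteq> {}}
    = (if flag P j \<and> covering P R li j \<noteq> {} then {j} else {})
      \<union> {q. Suc j \<le> q \<and> q < lo \<and> flag P q \<and> covering P R li q \<noteq> {}}"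
    using j by (auto simp: Suc_le_eq le_less)
  ultimately show ?case
    using Suc.IH[of "Suc j"] Suc.prems
    by (simp add: Let_def card_covering[OF assms(1) j, symmetric]
        card_open_intervals_Suc[OF assms(1) j, symmetric])
qed simp

lemma snd_sweep:
  "snd (sweep P R j r c) = 1 + (\<Sum>i\<in>{j..<j + r}. 1 + length (LA P i) + length (LZ P i))"
  by (induction r arbitrary: j c) (simp_all add: Let_def sum.atLeast_Suc_lessThan)

lemma sum_length_fibre_lists_le:
  fixes lo li :: nat
  assumes "\<forall>q<lo. distinct (g q) \<and> set (g q) = {k. k < li \<and> f k = Some q}"
  shows "(\<Sum>q<lo. length (g q)) \<le> li"
proof -
  have "(\<Sum>q<lo. length (g q)) = (\<Sum>q<lo. card {k. k < li \<and> f k = Some q})"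
    using assms by (intro sum.cong) (auto simp flip: distinct_card)
  also have "\<dots> = card (\<Union>q<lo. {k. k < li \<and> f k = Some q})"
    by (rule card_UN_disjoint[symmetric]) auto
  also have "\<dots> \<le> card {..<li}" by (rule card_mono) auto
  finally show ?thesis by simp
qed

text \<open>Each input entry occurs in at most one list L_A and one list L_Z.\<close>
lemma snd_sweep_le:
  assumes "interval_lists P li lo"
  shows "snd (sweep P R 0 lo c) \<le> 1 + lo + 2 * li"
proof -
  have "(\<Sum>q<lo. length (LA P q)) \<le> li"
    using assms unfolding interval_lists_def by (intro sum_length_fibre_lists_le[where f = "sigA P"]) blast
  moreover have "(\<Sum>q<lo. length (LZ P q)) \<le> li"
    using assms unfolding interval_lists_def by (intro sum_length_fibre_lists_le[where f = "sigZ P"]) blast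
  ultimately show ?thesis
    unfolding snd_sweep add_0 atLeast0LessThan sum.distrib by simp
qed

definition reached_outputs :: "nat \<Rightarrow> nat \<Rightarrow> (nat \<Rightarrow> nat \<Rightarrow> bool) \<Rightarrow> nat \<Rightarrow> nat \<Rightarrow> nat \<Rightarrow> nat \<Rightarrow> nat \<times> nat \<Rightarrow> nat set" where
  "reached_outputs m n M rm rp sm sp x =
     {q. q < length (bnd_out rm rp sm sp) \<and> reachable m n M x (bnd_out rm rp sm sp ! q)}"

lemma is_phi_sigma:
  assumes "is_phi m n M rm rp sm sp P" "k < length (bnd_in rm rp sm sp)"
  shows "if is_one m n M (bnd_in rm rp sm sp ! k) \<and> reached_outputs m n M rm rp sm sp (bnd_in rm rp sm sp ! k) \<noteq> {}
    then sigA P k = Some (Min (reached_outputs m n M rm rp sm sp (bnd_in rm rp sm sp ! k)))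
      \<and> sigZ P k = Some (Max (reached_outputs m n M rm rp sm sp (bnd_in rm rp sm sp ! k)))
    else sigA P k = None \<and> sigZ P k = None"
  using assms unfolding is_phi_def reached_outputs_def Let_def by blast

lemma is_phi_lists:
  assumes "is_phi m n M rm rp sm sp P" "q < length (bnd_out rm rp sm sp)"
  shows "flag P q \<longleftrightarrow> (\<exists>k < length (bnd_in rm rp sm sp).
      reachable m n M (bnd_in rm rp sm sp ! k) (bnd_out rm rp sm sp ! q))"
    and "distinct (LA P q)" "set (LA P q) = {k. k < length (bnd_in rm rp sm sp) \<and> sigA P k = Some q}"
    and "distinct (LZ P q)" "set (LZ P q) = {k. k < length (bnd_in rm rp sm sp) \<and> sigZ P k = Some q}"
  using assms unfolding is_phi_def Let_def by blast+

lemma is_phi_sigma_Some: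
  assumes "is_phi m n M rm rp sm sp P" "k < length (bnd_in rm rp sm sp)"
    and "sigA P k = Some a" "sigZ P k = Some z"
  shows "a \<in> reached_outputs m n M rm rp sm sp (bnd_in rm rp sm sp ! k)"
    "z \<in> reached_outputs m n M rm rp sm sp (bnd_in rm rp sm sp ! k)" "a \<le> z"
proof -
  let ?S = "reached_outputs m n M rm rp sm sp (bnd_in rm rp sm sp ! k)"
  have "finite ?S" by (simp add: reached_outputs_def)
  moreover have "?S \<noteq> {}" "a = Min ?S" "z = Max ?S"
    using is_phi_sigma[OF assms(1,2)] assms(3,4) by (auto split: if_splits)
  ultimately show "a \<in> ?S" "z \<in> ?S" "a \<le> z" by auto
qed

lemma is_phi_sigma_reachable:
  assumes "is_phi m n M rm rp sm sp P" "k < length (bnd_in rm rp sm sp)"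
    and "q \<in> reached_outputs m n M rm rp sm sp (bnd_in rm rp sm sp ! k)"
  obtains a z where "sigA P k = Some a" "sigZ P k = Some z" "a \<le> q" "q \<le> z"
proof -
  let ?S = "reached_outputs m n M rm rp sm sp (bnd_in rm rp sm sp ! k)"
  have "is_one m n M (bnd_in rm rp sm sp ! k)"
    using assms(3) by (simp add: reached_outputs_def reachable_iff_rtranclp)
  moreover have "?S \<noteq> {}" using assms(3) by blast
  ultimately have "sigA P k = Some (Min ?S)" "sigZ P k = Some (Max ?S)"
    using is_phi_sigma[OF assms(1,2)] by simp_all
  moreover have "Min ?S \<le> q" "q \<le> Max ?S"
    using assms(3) by (simp_all add: reached_outputs_def)
  ultimately show ?thesis using that by blast
qed

lemma is_phi_interval_lists:
  assumes "is_phi m n M rm rp sm sp P"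
  shows "interval_lists P (length (bnd_in rm rp sm sp)) (length (bnd_out rm rp sm sp))"
  unfolding interval_lists_def
  using is_phi_sigma[OF assms] is_phi_sigma_Some[OF assms] is_phi_lists[OF assms]
  by (metis (no_types, lifting) option.distinct(1))

text \<open>The flag cannot be dropped: the output positions reached from one input entry need not
  form an interval, only their intersection with the positions reached from the whole input
  boundary does.\<close>
lemma is_phi_reachable_bnd_out_iff:
  assumes block: "1 \<le> rm" "rm \<le> rp" "1 \<le> sm" "sm \<le> sp"
    and phi: "is_phi m n M rm rp sm sp P"
    and R: "\<forall>k < length (bnd_in rm rp sm sp). R k = reachable m n M (1, 1) (bnd_in rm rp sm sp ! k)"
    and q: "q < length (bnd_out rm rp sm sp)"
  shows "reachable m n M (1, 1) (bnd_out rm rp sm sp ! q)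
    \<longleftrightarrow> flag P q \<and> covering P R (length (bnd_in rm rp sm sp)) q \<noteq> {}"
proof
  assume reach: "reachable m n M (1, 1) (bnd_out rm rp sm sp ! q)"
  obtain k where k: "k < length (bnd_in rm rp sm sp)"
    "reachable m n M (1, 1) (bnd_in rm rp sm sp ! k)"
    "reachable m n M (bnd_in rm rp sm sp ! k) (bnd_out rm rp sm sp ! q)"
    using reachable_bnd_out_through_bnd_in[OF block(2,4) _ q reach] block(1) by auto
  moreover obtain a z where "sigA P k = Some a" "sigZ P k = Some z" "a \<le> q" "q \<le> z"
    using is_phi_sigma_reachable[OF phi k(1)] k(3) q by (auto simp: reached_outputs_def)
  ultimately have "k \<in> covering P R (length (bnd_in rm rp sm sp)) q"
    using R by (auto simp: covering_def)
  moreover have "flag P q" using is_phi_lists(1)[OF phi q] k by blast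
  ultimately show "flag P q \<and> covering P R (length (bnd_in rm rp sm sp)) q \<noteq> {}" by blast
next
  assume "flag P q \<and> covering P R (length (bnd_in rm rp sm sp)) q \<noteq> {}"
  then obtain k k' a z where k: "k < length (bnd_in rm rp sm sp)" "R k"
      "sigA P k = Some a" "sigZ P k = Some z" "a \<le> q" "q \<le> z"
    and k': "k' < length (bnd_in rm rp sm sp)"
      "reachable m n M (bnd_in rm rp sm sp ! k') (bnd_out rm rp sm sp ! q)"
    using is_phi_lists(1)[OF phi q] unfolding covering_def by blast
  have "a \<in> reached_outputs m n M rm rp sm sp (bnd_in rm rp sm sp ! k)"
    "z \<in> reached_outputs m n M rm rp sm sp (bnd_in rm rp sm sp ! k)"
    using is_phi_sigma_Some[OF phi k(1,3,4)] by simp_all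
  then have "reachable m n M (bnd_in rm rp sm sp ! k) (bnd_out rm rp sm sp ! q)"
    using reachable_bnd_out_between[OF block(2,4) k(1) k'(1) k(5,6) _ _ _ k'(2)]
    by (simp add: reached_outputs_def)
  then show "reachable m n M (1, 1) (bnd_out rm rp sm sp ! q)"
    using R k(1,2) reachable_trans by blast
qed

theorem lemma1:
  "\<exists>K::nat. \<forall>m n M rm rp sm sp P R.
     1 \<le> rm \<and> rm \<le> rp \<and> rp \<le> m \<and> 1 \<le> sm \<and> sm \<le> sp \<and> sp \<le> n
     \<and> is_phi m n M rm rp sm sp P
     \<and> (\<forall>k < length (bnd_in rm rp sm sp).
           R k = reachable m n M (1, 1) (bnd_in rm rp sm sp ! k))
     \<longrightarrow> (let res = sweep P R 0 (length (bnd_out rm rp sm sp)) 0 in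
           set (fst res) = {q. q < length (bnd_out rm rp sm sp)
                               \<and> reachable m n M (1, 1) (bnd_out rm rp sm sp ! q)}
         \<and> snd res \<le> K * ((rp + 1 - rm) + (sp + 1 - sm)))"
proof (intro exI[of _ 4] allI impI, elim conjE)
  fix m n M rm rp sm sp P R
  assume block: "1 \<le> rm" "rm \<le> rp" "1 \<le> sm" "sm \<le> sp"
    and phi: "is_phi m n M rm rp sm sp P"
    and R: "\<forall>k < length (bnd_in rm rp sm sp). R k = reachable m n M (1, 1) (bnd_in rm rp sm sp ! k)"
  let ?li = "length (bnd_in rm rp sm sp)" and ?lo = "length (bnd_out rm rp sm sp)"
  have lists: "interval_lists P ?li ?lo" using is_phi_interval_lists[OF phi] .
  have "set (fst (sweep P R 0 ?lo 0)) = {q. q < ?lo \<and> flag P q \<and> covering P R ?li q \<noteq> {}}"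
    using set_sweep[OF lists, of 0 ?lo R] by (simp add: open_intervals_def)
  also have "\<dots> = {q. q < ?lo \<and> reachable m n M (1, 1) (bnd_out rm rp sm sp ! q)}"
    using is_phi_reachable_bnd_out_iff[OF block phi R] by blast
  moreover have "snd (sweep P R 0 ?lo 0) \<le> 4 * ((rp + 1 - rm) + (sp + 1 - sm))"
    using snd_sweep_le[OF lists, of R 0] block by (simp add: length_bnd_in length_bnd_out)
  ultimately show "let res = sweep P R 0 ?lo 0 in
      set (fst res) = {q. q < ?lo \<and> reachable m n M (1, 1) (bnd_out rm rp sm sp ! q)}
    \<and> snd res \<le> 4 * ((rp + 1 - rm) + (sp + 1 - sm))"
    by (simp add: Let_def)
qed

end
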